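(* Let $\lambda$ be a partition and $\pi$ an $R_\lambda$-permutation. If $\mathcal{D}_\lambda(\pi)$, viewed as a subset of $\mathbb{Z}^{|\lambda|}$, is a convex polytope, then $\pi$ is $R_\lambda$-312-avoiding.
   Context: Fix $n\ge1$; $[m]=\{1,\dots,m\}$. A partition is $\lambda=(\lambda_1\ge\cdots\ge\lambda_n\ge0)\in\mathbb{Z}^n$, $|\lambda|:=\sum_i\lambda_i$, with boxes $(j,i)$ (column $j$, row $i$), $1\le j\le\lambda_1$, $1\le i\le\zeta_j:=\#\{i:\lambda_i\ge j\}$; $R_\lambda:=\{\zeta_j:\zeta_j<n\}$ with elements $q_1<\dots<q_r$, $q_0:=0$, $q_{r+1}:=n$. An $R_\lambda$-permutation is a permutation $\pi$ of $[n]$ (one-line notation) strictly increasing on each index set $\{q_{h-1}+1,\dots,q_h\}$; it is $R_\lambda$-312-containing if there exist $h\in[r-1]$ and $1\le a\le q_h<b\le q_{h+1}<c\le n$ with $\pi_b<\pi_c<\pi_a$, and $R_\lambda$-312-avoiding otherwise. A tableau of shape $\lambda$ fills the boxes with values in $[n]$, strictly increasing down columns and weakly increasing along rows; $\mathcal{T}_\lambda$ is their set, ordered entrywise; a tableau is identified with the point of $\mathbb{Z}^{|\lambda|}$ given by its entries. A set $\mathcal{D}\subseteq\mathbb{Z}^N$ is a convex polytope if it is the set of solutions in $\mathbb{Z}^N$ of a finite system of linear inequalities. The $\lambda$-key $Y_\lambda(\pi)$ is the tableau whose column $j$ consists of $\{\pi_1,\dots,\pi_{\zeta_j}\}$ in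 increasing order. Scanning tableau: the earliest weakly increasing subsequence (EWIS) of $x_1,x_2,\dots$ is $x_{i_1},x_{i_2},\dots$ with $i_1=1$ and $i_u$ the smallest index $>i_{u-1}$ with $x_{i_u}\ge x_{i_{u-1}}$. For $T\in\mathcal{T}_\lambda$ and $l\in[\lambda_1]$, column $l$ of $S(T)$ is computed as follows: consider the boxes of $T$ in columns $l,\dots,\lambda_1$, initially unmarked; for $k=\zeta_l,\dots,1$ in turn, form the sequence of lowest unmarked entries of columns $l,l+1,\dots$ (left to right, over columns still having unmarked boxes), take its EWIS, mark the contributing boxes, and set the entry of $S(T)$ at column $l$, row $k$ to the last term of the EWIS. $\mathcal{D}_\lambda(\pi):=\{T\in\mathcal{T}_\lambda:S(T)\le Y_\lambda(\pi)\}$. *)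

theory Defs
  imports Complex_Main
begin

text \<open>Partitions are functions lam :: nat => nat, only the values at rows 1..n matter.
  Boxes are pairs (column j, row i). Tableaux / points of Z^{|lam|} are functions
  nat*nat => int vanishing outside the boxes.\<close>

definition is_partition :: "nat \<Rightarrow> (nat \<Rightarrow> nat) \<Rightarrow> bool" where
  "is_partition n lam \<longleftrightarrow> (\<forall>i j. 1 \<le> i \<and> i \<le> j \<and> j \<le> n \<longrightarrow> lam j \<le> lam i)"

definition zeta :: "nat \<Rightarrow> (nat \<Rightarrow> nat) \<Rightarrow> nat \<Rightarrow> nat" where
  "zeta n lam j = card {i \<in> {1..n}. lam i \<ge> j}"

definition boxes :: "nat \<Rightarrow> (nat \<Rightarrow> nat) \<Rightarrow> (nat \<times> nat) set" where
  "boxes n lam = {(j, i). 1 \<le> j \<and> j \<le> lam 1 \<and> 1 \<le> i \<and> i \<le> zeta n lam j}"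

definition Rset :: "nat \<Rightarrow> (nat \<Rightarrow> nat) \<Rightarrow> nat set" where
  "Rset n lam = {zeta n lam j | j. 1 \<le> j \<and> j \<le> lam 1 \<and> zeta n lam j < n}"

definition rR :: "nat \<Rightarrow> (nat \<Rightarrow> nat) \<Rightarrow> nat" where
  "rR n lam = card (Rset n lam)"

text \<open>q h for h = 0..r+1: q_0 = 0, q_1 < ... < q_r the elements of R, q_{r+1} = n.\<close>
definition qR :: "nat \<Rightarrow> (nat \<Rightarrow> nat) \<Rightarrow> nat \<Rightarrow> nat" where
  "qR n lam h = (0 # sorted_list_of_set (Rset n lam) @ [n]) ! h"

definition R_permutation :: "nat \<Rightarrow> (nat \<Rightarrow> nat) \<Rightarrow> (nat \<Rightarrow> nat) \<Rightarrow> bool" where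
  "R_permutation n lam \<pi> \<longleftrightarrow> bij_betw \<pi> {1..n} {1..n} \<and>
     (\<forall>h \<in> {1..rR n lam + 1}. strict_mono_on {qR n lam (h-1) + 1 .. qR n lam h} \<pi>)"

definition R_312_containing :: "nat \<Rightarrow> (nat \<Rightarrow> nat) \<Rightarrow> (nat \<Rightarrow> nat) \<Rightarrow> bool" where
  "R_312_containing n lam \<pi> \<longleftrightarrow>
     (\<exists>h \<in> {1..rR n lam - 1}. \<exists>a b c. 1 \<le> a \<and> a \<le> qR n lam h \<and> qR n lam h < b \<and>
        b \<le> qR n lam (h+1) \<and> qR n lam (h+1) < c \<and> c \<le> n \<and> \<pi> b < \<pi> c \<and> \<pi> c < \<pi> a)"

definition R_312_avoiding :: "nat \<Rightarrow> (nat \<Rightarrow> nat) \<Rightarrow> (nat \<Rightarrow> nat) \<Rightarrow> bool" where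
  "R_312_avoiding n lam \<pi> \<longleftrightarrow> \<not> R_312_containing n lam \<pi>"

definition tableaux :: "nat \<Rightarrow> (nat \<Rightarrow> nat) \<Rightarrow> (nat \<times> nat \<Rightarrow> int) set" where
  "tableaux n lam = {T. (\<forall>p. p \<notin> boxes n lam \<longrightarrow> T p = 0) \<and>
     (\<forall>p \<in> boxes n lam. 1 \<le> T p \<and> T p \<le> int n) \<and>
     (\<forall>j i. (j, i) \<in> boxes n lam \<and> (j, i+1) \<in> boxes n lam \<longrightarrow> T (j, i) < T (j, i+1)) \<and>
     (\<forall>j i. (j, i) \<in> boxes n lam \<and> (j+1, i) \<in> boxes n lam \<longrightarrow> T (j, i) \<le> T (j+1, i))}"

definition tab_le :: "nat \<Rightarrow> (nat \<Rightarrow> nat) \<Rightarrow> (nat \<times> nat \<Rightarrow> int) \<Rightarrow> (nat \<times> nat \<Rightarrow> int) \<Rightarrow> bool" where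
  "tab_le n lam T U \<longleftrightarrow> (\<forall>p \<in> boxes n lam. T p \<le> U p)"

definition key :: "nat \<Rightarrow> (nat \<Rightarrow> nat) \<Rightarrow> (nat \<Rightarrow> nat) \<Rightarrow> (nat \<times> nat \<Rightarrow> int)" where
  "key n lam \<pi> = (\<lambda>(j, i). if (j, i) \<in> boxes n lam
      then int (sorted_list_of_set (\<pi> ` {1..zeta n lam j}) ! (i - 1)) else 0)"

text \<open>Earliest weakly increasing subsequence of a list of (tag, value) pairs.\<close>
fun ewis_aux :: "int \<Rightarrow> ('a \<times> int) list \<Rightarrow> ('a \<times> int) list" where
  "ewis_aux c [] = []"
| "ewis_aux c (p # ps) = (if snd p \<ge> c then p # ewis_aux (snd p) ps else ewis_aux c ps)"

fun ewis :: "('a \<times> int) list \<Rightarrow> ('a \<times> int) list" where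
  "ewis [] = []"
| "ewis (p # ps) = p # ewis_aux (snd p) ps"

text \<open>One scanning step for column l: M is the set of marked boxes.\<close>
definition has_unmarked :: "nat \<Rightarrow> (nat \<Rightarrow> nat) \<Rightarrow> (nat \<times> nat) set \<Rightarrow> nat \<Rightarrow> bool" where
  "has_unmarked n lam M j \<longleftrightarrow> (\<exists>i \<in> {1..zeta n lam j}. (j, i) \<notin> M)"

definition lowest_unmarked :: "nat \<Rightarrow> (nat \<Rightarrow> nat) \<Rightarrow> (nat \<times> nat) set \<Rightarrow> nat \<Rightarrow> nat" where
  "lowest_unmarked n lam M j = Max {i \<in> {1..zeta n lam j}. (j, i) \<notin> M}"

definition scan_seq :: "nat \<Rightarrow> (nat \<Rightarrow> nat) \<Rightarrow> (nat \<times> nat \<Rightarrow> int) \<Rightarrow> nat \<Rightarrow> (nat \<times> nat) set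
     \<Rightarrow> ((nat \<times> nat) \<times> int) list" where
  "scan_seq n lam T l M =
     map (\<lambda>j. ((j, lowest_unmarked n lam M j), T (j, lowest_unmarked n lam M j)))
       (filter (has_unmarked n lam M) [l..<lam 1 + 1])"

fun scan_iter :: "nat \<Rightarrow> (nat \<Rightarrow> nat) \<Rightarrow> (nat \<times> nat \<Rightarrow> int) \<Rightarrow> nat \<Rightarrow> nat \<Rightarrow> (nat \<times> nat) set
     \<Rightarrow> (nat \<Rightarrow> int)" where
  "scan_iter n lam T l 0 M = (\<lambda>_. 0)"
| "scan_iter n lam T l (Suc k) M =
     (let e = ewis (scan_seq n lam T l M)
      in (scan_iter n lam T l k (M \<union> set (map fst e))) (Suc k := snd (last e)))"

definition scanning :: "nat \<Rightarrow> (nat \<Rightarrow> nat) \<Rightarrow> (nat \<times> nat \<Rightarrow> int) \<Rightarrow> (nat \<times> nat \<Rightarrow> int)" where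
  "scanning n lam T = (\<lambda>(l, k). if (l, k) \<in> boxes n lam
      then scan_iter n lam T l (zeta n lam l) {} k else 0)"

definition Dset :: "nat \<Rightarrow> (nat \<Rightarrow> nat) \<Rightarrow> (nat \<Rightarrow> nat) \<Rightarrow> (nat \<times> nat \<Rightarrow> int) set" where
  "Dset n lam \<pi> = {T \<in> tableaux n lam. tab_le n lam (scanning n lam T) (key n lam \<pi>)}"

text \<open>Convex polytope in Z^B (B a finite coordinate set, points = int functions vanishing
  off B): the integer solution set of finitely many (real) linear inequalities.\<close>
definition convex_polytope_Z :: "(nat \<times> nat) set \<Rightarrow> (nat \<times> nat \<Rightarrow> int) set \<Rightarrow> bool" where
  "convex_polytope_Z B D \<longleftrightarrow> (\<exists>A :: ((nat \<times> nat \<Rightarrow> real) \<times> real) set. finite A \<and>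
     D = {x. (\<forall>p. p \<notin> B \<longrightarrow> x p = 0) \<and>
             (\<forall>(a, b) \<in> A. (\<Sum>p \<in> B. a p * real_of_int (x p)) \<le> b)})"

end

theory Submission
  imports Defs
begin

(*
  Suppose pi has an R-312 pattern pi b < pi c < pi a with a <= p < b <= q < c, where p < q are
  consecutive elements of R.  Then the columns have heights <= p or >= q, and some column l of
  height q is followed by one of height p.  Put Q = pi`{1..q}, S = pi`{1..p} and z = pi c,
  so z lies outside Q, strictly between its neighbours w < z < x in Q.

  A tableau whose columns of height >= q are those of the key and whose lower columns are the
  images of the key columns under an injection S -> Q that moves no element up is its own
  scanning tableau and lies below the key, hence in D.  One can choose such an injection phi
  whose image contains x but not w.  Replacing x by w, resp. by z, after phi gives three
  tableaux T_w, T_x, T_z whose entries are affine in the replaced value, so T_z is a convex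
  combination of the points T_w and T_x of D.  But scanning column l of T_z picks up the z of
  column l+1, which exceeds the corresponding key entry w; so T_z is not in D, and D is not
  the set of integer points of a polyhedron.
*)

section \<open>Sorted lists of finite sets\<close>

lemma sorted_list_of_set_nth_less_iff:
  assumes "i < card A" "j < card A"
  shows "sorted_list_of_set A ! i < sorted_list_of_set A ! j \<longleftrightarrow> i < j"
proof -
  have "sorted_wrt (<) (sorted_list_of_set A)" "length (sorted_list_of_set A) = card A"
    by (simp_all add: strict_sorted_list_of_set)
  then show ?thesis
    using assms sorted_wrt_nth_less by (metis linorder_neq_iff order_less_asym)
qed

lemma sorted_list_of_set_nth_mem: "i < card A \<Longrightarrow> sorted_list_of_set A ! i \<in> A"
  by (metis card.infinite length_sorted_list_of_set not_less_zero nth_mem set_sorted_list_of_set)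

lemma sorted_list_of_set_nthE:
  assumes "finite A" "a \<in> A"
  obtains i where "i < card A" "sorted_list_of_set A ! i = a"
  by (metis assms in_set_conv_nth length_sorted_list_of_set set_sorted_list_of_set)

lemma card_less_sorted_list_of_set_nth:
  assumes "k < card A"
  shows "card {a \<in> A. a < sorted_list_of_set A ! k} = k"
proof -
  have fin: "finite A" using assms card.infinite by fastforce
  have "{a \<in> A. a < sorted_list_of_set A ! k} = (\<lambda>i. sorted_list_of_set A ! i) ` {..<k}"
  proof (intro equalityI subsetI)
    fix a assume a: "a \<in> {a \<in> A. a < sorted_list_of_set A ! k}"
    then obtain i where "i < card A" "sorted_list_of_set A ! i = a"
      using sorted_list_of_set_nthE[OF fin] by blast
    with a assms show "a \<in> (\<lambda>i. sorted_list_of_set A ! i) ` {..<k}"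
      using sorted_list_of_set_nth_less_iff by fastforce
  next
    fix a assume "a \<in> (\<lambda>i. sorted_list_of_set A ! i) ` {..<k}"
    then obtain i where "i < k" "a = sorted_list_of_set A ! i" by blast
    with assms show "a \<in> {a \<in> A. a < sorted_list_of_set A ! k}"
      using sorted_list_of_set_nth_less_iff[of i A k] sorted_list_of_set_nth_mem[of i A] by simp
  qed
  moreover have "inj_on (\<lambda>i. sorted_list_of_set A ! i) {..<k}"
    using assms by (intro inj_on_nth) auto
  ultimately show ?thesis by (simp add: card_image)
qed

lemma sorted_list_of_set_nth_less_iff_card_less:
  assumes "k < card A" "z \<notin> A"
  shows "sorted_list_of_set A ! k < z \<longleftrightarrow> k < card {a \<in> A. a < z}"
proof -
  let ?s = "sorted_list_of_set A ! k"
  have fin: "finite A" and s: "?s \<in> A" "?s \<noteq> z"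
    using assms sorted_list_of_set_nth_mem card.infinite by fastforce+
  show ?thesis
  proof
    assume "?s < z"
    then have "insert ?s {a \<in> A. a < ?s} \<subseteq> {a \<in> A. a < z}" using s by auto
    then have "card (insert ?s {a \<in> A. a < ?s}) \<le> card {a \<in> A. a < z}"
      using fin by (intro card_mono) auto
    then show "k < card {a \<in> A. a < z}"
      using card_less_sorted_list_of_set_nth[OF assms(1)] fin by simp
  next
    assume "k < card {a \<in> A. a < z}"
    moreover have "\<not> ?s < z \<Longrightarrow> card {a \<in> A. a < z} \<le> card {a \<in> A. a < ?s}"
      using fin s by (intro card_mono) auto
    ultimately show "?s < z"
      using card_less_sorted_list_of_set_nth[OF assms(1)] by linarith
  qed
qed

lemma sorted_list_of_set_nth_le_if_count_le:
  assumes "finite A" "finite B" "k < card A" "k < card B"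
    and "\<And>t. card {b \<in> B. b \<le> t} \<le> card {a \<in> A. a \<le> t}"
  shows "sorted_list_of_set A ! k \<le> sorted_list_of_set B ! k"
proof (rule ccontr)
  let ?t = "sorted_list_of_set B ! k"
  assume "\<not> ?thesis"
  then have gt: "?t < sorted_list_of_set A ! k" by simp
  have tB: "?t \<in> B" using sorted_list_of_set_nth_mem[OF assms(4)] .
  have "k + 1 = card (insert ?t {b \<in> B. b < ?t})"
    using card_less_sorted_list_of_set_nth[OF assms(4)] assms(2) by simp
  also have "\<dots> \<le> card {b \<in> B. b \<le> ?t}"
    using assms(2) tB by (intro card_mono) auto
  also have "\<dots> \<le> card {a \<in> A. a \<le> ?t}" by (rule assms(5))
  also have "\<dots> \<le> card {a \<in> A. a < sorted_list_of_set A ! k}"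
    using gt assms(1) by (intro card_mono) auto
  also have "\<dots> = k" using card_less_sorted_list_of_set_nth[OF assms(3)] .
  finally show False by simp
qed

lemma sorted_list_of_set_nth_subset_le:
  assumes "finite A" "B \<subseteq> A" "k < card B"
  shows "sorted_list_of_set A ! k \<le> sorted_list_of_set B ! k"
proof (rule sorted_list_of_set_nth_le_if_count_le)
  show fin: "finite B" using assms finite_subset by blast
  show "k < card A" using card_mono[OF assms(1,2)] assms(3) by simp
  fix t show "card {b \<in> B. b \<le> t} \<le> card {a \<in> A. a \<le> t}"
    using assms(1,2) by (intro card_mono) auto
qed (use assms in simp_all)

lemma sorted_list_of_set_nth_image_le:
  fixes f :: "nat \<Rightarrow> nat"
  assumes "finite X" "inj_on f X" "\<And>a. a \<in> X \<Longrightarrow> f a \<le> a" "k < card X"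
  shows "sorted_list_of_set (f ` X) ! k \<le> sorted_list_of_set X ! k"
proof (rule sorted_list_of_set_nth_le_if_count_le)
  show "k < card (f ` X)" using assms by (simp add: card_image)
  fix t
  have "card {a \<in> X. a \<le> t} = card (f ` {a \<in> X. a \<le> t})"
    using assms(2) by (intro card_image[symmetric]) (auto intro: inj_on_subset)
  also have "\<dots> \<le> card {b \<in> f ` X. b \<le> t}"
    using assms(1,3) by (intro card_mono) force+
  finally show "card {a \<in> X. a \<le> t} \<le> card {b \<in> f ` X. b \<le> t}" .
qed (use assms in auto)

lemma sorted_list_of_set_image_strict_mono:
  assumes "finite A" "strict_mono_on A g"
  shows "sorted_list_of_set (g ` A) = map g (sorted_list_of_set A)"
proof -
  have "sorted_wrt (\<lambda>a b. g a < g b) (sorted_list_of_set A)"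
    by (rule sorted_wrt_mono_rel[OF _ strict_sorted_list_of_set])
      (use assms in \<open>auto dest: strict_mono_onD\<close>)
  then have "sorted_wrt (<) (map g (sorted_list_of_set A))"
    by (simp add: sorted_wrt_map)
  then show ?thesis
    using assms(1) by (metis list.set_map sorted_list_of_set.idem_if_sorted_distinct
        set_sorted_list_of_set strict_sorted_iff)
qed

lemma sorted_list_of_set_nth_replace:
  fixes A :: "nat set"
  assumes "finite A" "w \<le> e" "e \<le> x" "\<And>a. a \<in> A \<Longrightarrow> a \<noteq> x \<Longrightarrow> a < w \<or> x < a" "k < card A"
  shows "sorted_list_of_set ((\<lambda>t. if t = x then e else t) ` A) ! k =
    (if sorted_list_of_set A ! k = x then e else sorted_list_of_set A ! k)"
proof -
  have "strict_mono_on A (\<lambda>t. if t = x then e else t)"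
  proof (rule strict_mono_onI)
    fix r s assume "r \<in> A" "s \<in> A" "r < s"
    then show "(if r = x then e else r) < (if s = x then e else s)"
      using assms(2,3) assms(4)[of r] assms(4)[of s] by auto
  qed
  then show ?thesis
    using assms(1,5) by (subst sorted_list_of_set_image_strict_mono) auto
qed

section \<open>Tableaux with prescribed column sets\<close>

definition column_tableau :: "nat \<Rightarrow> (nat \<Rightarrow> nat) \<Rightarrow> (nat \<Rightarrow> nat set) \<Rightarrow> nat \<times> nat \<Rightarrow> int" where
  "column_tableau n lam C = (\<lambda>(j, i). if (j, i) \<in> boxes n lam
      then int (sorted_list_of_set (C j) ! (i - 1)) else 0)"

definition columns_of_shape :: "nat \<Rightarrow> (nat \<Rightarrow> nat) \<Rightarrow> (nat \<Rightarrow> nat set) \<Rightarrow> bool" where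
  "columns_of_shape n lam C \<longleftrightarrow>
     (\<forall>j. 1 \<le> j \<and> j \<le> lam 1 \<longrightarrow> card (C j) = zeta n lam j \<and> C j \<subseteq> {1..n})"

definition nested_columns :: "(nat \<Rightarrow> nat) \<Rightarrow> (nat \<Rightarrow> nat set) \<Rightarrow> bool" where
  "nested_columns lam C \<longleftrightarrow> (\<forall>j j'. 1 \<le> j \<and> j \<le> j' \<and> j' \<le> lam 1 \<longrightarrow> C j' \<subseteq> C j)"

lemma columns_of_shapeD:
  assumes "columns_of_shape n lam C" "1 \<le> j" "j \<le> lam 1"
  shows "card (C j) = zeta n lam j" "C j \<subseteq> {1..n}" "finite (C j)"
  using assms finite_subset[of "C j" "{1..n}"] by (auto simp: columns_of_shape_def)

lemma key_eq_column_tableau: "key n lam \<pi> = column_tableau n lam (\<lambda>j. \<pi> ` {1..zeta n lam j})"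
  unfolding key_def column_tableau_def ..

lemma column_tableau_box:
  "(j, i) \<in> boxes n lam \<Longrightarrow> column_tableau n lam C (j, i) = int (sorted_list_of_set (C j) ! (i - 1))"
  by (simp add: column_tableau_def)

lemma column_tableau_outside: "p \<notin> boxes n lam \<Longrightarrow> column_tableau n lam C p = 0"
  by (cases p) (simp add: column_tableau_def)

lemma column_tableau_mem:
  assumes "columns_of_shape n lam C" "(j, i) \<in> boxes n lam"
  shows "column_tableau n lam C (j, i) \<in> int ` C j"
  using assms sorted_list_of_set_nth_mem[of "i - 1" "C j"]
  by (auto simp: column_tableau_box columns_of_shape_def boxes_def)

lemma column_tableau_strict:
  assumes "columns_of_shape n lam C" "1 \<le> j" "j \<le> lam 1" "1 \<le> i" "i < i'" "i' \<le> zeta n lam j"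
  shows "column_tableau n lam C (j, i) < column_tableau n lam C (j, i')"
  using assms sorted_list_of_set_nth_less_iff[of "i - 1" "C j" "i' - 1"]
  by (simp add: column_tableau_def boxes_def columns_of_shape_def)

lemma column_tableau_entryE:
  assumes "columns_of_shape n lam C" "1 \<le> j" "j \<le> lam 1" "a \<in> C j"
  obtains i where "1 \<le> i" "i \<le> zeta n lam j" "column_tableau n lam C (j, i) = int a"
proof -
  have "finite (C j)" "card (C j) = zeta n lam j"
    using assms by (auto simp: columns_of_shape_def intro: finite_subset)
  then obtain k where "k < zeta n lam j" "sorted_list_of_set (C j) ! k = a"
    using sorted_list_of_set_nthE[of "C j" a] assms(4) by metis
  then show thesis
    using assms that[of "Suc k"] by (simp add: column_tableau_def boxes_def)
qed

lemma column_tableau_in_tableaux: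
  assumes shape: "columns_of_shape n lam C" and nested: "nested_columns lam C"
  shows "column_tableau n lam C \<in> tableaux n lam"
  unfolding tableaux_def
proof (intro CollectI conjI allI impI ballI)
  fix p assume "p \<notin> boxes n lam"
  then show "column_tableau n lam C p = 0" by (rule column_tableau_outside)
next
  fix p assume p: "p \<in> boxes n lam"
  then obtain j i where ji: "p = (j, i)" by force
  have "C j \<subseteq> {1..n}" using shape p ji by (auto simp: columns_of_shape_def boxes_def)
  then show "1 \<le> column_tableau n lam C p" "column_tableau n lam C p \<le> int n"
    using column_tableau_mem[OF shape p[unfolded ji]] ji by auto
next
  fix j i assume "(j, i) \<in> boxes n lam \<and> (j, i + 1) \<in> boxes n lam"
  then show "column_tableau n lam C (j, i) < column_tableau n lam C (j, i + 1)"
    using column_tableau_strict[OF shape, of j i "i + 1"] by (auto simp: boxes_def)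
next
  fix j i assume a: "(j, i) \<in> boxes n lam \<and> (j + 1, i) \<in> boxes n lam"
  have "C (j + 1) \<subseteq> C j" using nested a by (auto simp: nested_columns_def boxes_def)
  moreover have "finite (C j)" "card (C (j + 1)) = zeta n lam (j + 1)"
    using shape a by (auto simp: columns_of_shape_def boxes_def intro: finite_subset)
  ultimately show "column_tableau n lam C (j, i) \<le> column_tableau n lam C (j + 1, i)"
    using a sorted_list_of_set_nth_subset_le[of "C j" "C (j + 1)" "i - 1"]
    by (auto simp: column_tableau_box boxes_def)
qed

section \<open>Scanning a tableau column by column\<close>

lemma ewis_aux_eq_filter: "(\<forall>q\<in>set ps. snd q \<le> c) \<Longrightarrow> ewis_aux c ps = filter (\<lambda>q. snd q = c) ps"
  by (induction ps arbitrary: c) auto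

lemma ewis_eq_filter_max:
  assumes "\<forall>q\<in>set ps. snd q \<le> snd p"
  shows "ewis (p # ps) = filter (\<lambda>q. snd q = snd p) (p # ps)"
  using ewis_aux_eq_filter[OF assms] by simp

lemma ewis_aux_last_ge:
  fixes ps :: "('a \<times> int) list"
  shows "c \<le> (if ewis_aux c ps = [] then c else snd (last (ewis_aux c ps))) \<and>
    (\<forall>q\<in>set ps. snd q \<le> (if ewis_aux c ps = [] then c else snd (last (ewis_aux c ps))))"
proof (induction ps arbitrary: c)
  case (Cons p ps)
  show ?case
  proof (cases "c \<le> snd p")
    case True
    then show ?thesis using Cons.IH[of "snd p"] by (auto split: if_splits)
  next
    case False
    then show ?thesis using Cons.IH[of c] by (auto split: if_splits)
  qed
qed simp

lemma ewis_last_ge: "q \<in> set xs \<Longrightarrow> snd q \<le> snd (last (ewis xs))"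
  using ewis_aux_last_ge by (cases xs) (fastforce split: if_splits)+

(* In columns l, ..., lam 1 exactly the boxes below row m j are marked, so that m j is the
   lowest unmarked row of column j. *)
definition bottom_marks :: "nat \<Rightarrow> (nat \<Rightarrow> nat) \<Rightarrow> nat \<Rightarrow> (nat \<Rightarrow> nat) \<Rightarrow> (nat \<times> nat) set" where
  "bottom_marks n lam l m = {(j, i). l \<le> j \<and> j \<le> lam 1 \<and> m j < i \<and> i \<le> zeta n lam j}"

definition mark_bottoms :: "nat \<Rightarrow> (nat \<Rightarrow> nat) \<Rightarrow> (nat \<Rightarrow> bool) \<Rightarrow> (nat \<Rightarrow> nat) \<Rightarrow> nat \<Rightarrow> nat" where
  "mark_bottoms l lam P m = (\<lambda>j. if l \<le> j \<and> j \<le> lam 1 \<and> 1 \<le> m j \<and> P j then m j - 1 else m j)"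

lemma bottom_marks_zeta: "bottom_marks n lam l (zeta n lam) = {}"
  unfolding bottom_marks_def by auto

lemma scan_seq_bottom_marks:
  assumes "\<And>j. l \<le> j \<Longrightarrow> j \<le> lam 1 \<Longrightarrow> m j \<le> zeta n lam j"
  shows "scan_seq n lam T l (bottom_marks n lam l m) =
    map (\<lambda>j. ((j, m j), T (j, m j))) (filter (\<lambda>j. 1 \<le> m j) [l..<lam 1 + 1])"
proof -
  let ?M = "bottom_marks n lam l m"
  have unmarked: "{i \<in> {1..zeta n lam j}. (j, i) \<notin> ?M} = {1..m j}"
    if "j \<in> set [l..<lam 1 + 1]" for j
  proof -
    have "l \<le> j" "j \<le> lam 1" using that by auto
    then show ?thesis using assms[of j] unfolding bottom_marks_def by auto
  qed
  have "filter (has_unmarked n lam ?M) [l..<lam 1 + 1] = filter (\<lambda>j. 1 \<le> m j) [l..<lam 1 + 1]"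
  proof (rule filter_cong[OF refl])
    fix j assume "j \<in> set [l..<lam 1 + 1]"
    then have "has_unmarked n lam ?M j \<longleftrightarrow> {1..m j} \<noteq> {}"
      using unmarked[of j] unfolding has_unmarked_def by blast
    then show "has_unmarked n lam ?M j \<longleftrightarrow> 1 \<le> m j" by simp
  qed
  moreover have "lowest_unmarked n lam ?M j = m j"
    if "j \<in> set [l..<lam 1 + 1]" "1 \<le> m j" for j
  proof -
    have "lowest_unmarked n lam ?M j = Max {1..m j}"
      using that unmarked[of j] unfolding lowest_unmarked_def by simp
    also have "\<dots> = m j" using that(2) by (intro Max_eqI) auto
    finally show ?thesis .
  qed
  ultimately show ?thesis
    unfolding scan_seq_def by simp
qed

lemma bottom_marks_mark_bottoms:
  assumes "\<And>j. l \<le> j \<Longrightarrow> j \<le> lam 1 \<Longrightarrow> m j \<le> zeta n lam j"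
  shows "bottom_marks n lam l m \<union> {(j, m j) | j. l \<le> j \<and> j \<le> lam 1 \<and> 1 \<le> m j \<and> P j} =
    bottom_marks n lam l (mark_bottoms l lam P m)"
proof (intro equalityI subsetI)
  fix p assume "p \<in> bottom_marks n lam l (mark_bottoms l lam P m)"
  then obtain j i where "p = (j, i)" "l \<le> j" "j \<le> lam 1" "mark_bottoms l lam P m j < i" "i \<le> zeta n lam j"
    by (auto simp: bottom_marks_def)
  then show "p \<in> bottom_marks n lam l m \<union> {(j, m j) | j. l \<le> j \<and> j \<le> lam 1 \<and> 1 \<le> m j \<and> P j}"
    by (cases "1 \<le> m j \<and> P j") (auto simp: bottom_marks_def mark_bottoms_def)
qed (use assms in \<open>auto simp: bottom_marks_def mark_bottoms_def\<close>)

lemma le_mark_bottoms: "i \<le> m j \<Longrightarrow> (P j \<Longrightarrow> i < m j) \<Longrightarrow> i \<le> mark_bottoms l lam P m j"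
  by (auto simp: mark_bottoms_def)

lemma scan_iter_Suc_top:
  "scan_iter n lam T l (Suc k) M (Suc k) = snd (last (ewis (scan_seq n lam T l M)))"
  by (simp add: Let_def)

lemma scan_iter_Suc_below:
  "i \<noteq> Suc k \<Longrightarrow> scan_iter n lam T l (Suc k) M i =
     scan_iter n lam T l k (M \<union> set (map fst (ewis (scan_seq n lam T l M)))) i"
  by (simp add: Let_def)

(* Every unmarked entry right of column l is z or repeats one of the k unmarked entries of
   column l.  While the bottom unmarked entry of column l exceeds z, it is then the maximum of
   the scanned sequence, so the EWIS consists of the entries equal to it. *)
definition scan_invariant ::
    "nat \<Rightarrow> (nat \<Rightarrow> nat) \<Rightarrow> (nat \<times> nat \<Rightarrow> int) \<Rightarrow> nat \<Rightarrow> int \<Rightarrow> nat \<Rightarrow> (nat \<Rightarrow> nat) \<Rightarrow> bool" where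
  "scan_invariant n lam T l z k m \<longleftrightarrow> m l = k \<and> (\<forall>j. l \<le> j \<and> j \<le> lam 1 \<longrightarrow> m j \<le> zeta n lam j) \<and>
     (\<forall>j i. l \<le> j \<and> j \<le> lam 1 \<and> 1 \<le> i \<and> i \<le> m j \<longrightarrow>
        T (j, i) = z \<or> (\<exists>i'. 1 \<le> i' \<and> i' \<le> k \<and> T (l, i') = T (j, i)))"

context
  fixes n :: nat and lam :: "nat \<Rightarrow> nat" and T :: "nat \<times> nat \<Rightarrow> int" and l :: nat and z :: int
  assumes columns_strict: "\<And>j i i'. l \<le> j \<Longrightarrow> j \<le> lam 1 \<Longrightarrow> 1 \<le> i \<Longrightarrow> i < i' \<Longrightarrow> i' \<le> zeta n lam j
      \<Longrightarrow> T (j, i) < T (j, i')"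
    and l_le: "l \<le> lam 1"
begin

lemma scan_seq_bottom_marks_Cons:
  assumes "scan_invariant n lam T l z (Suc k) m"
  shows "scan_seq n lam T l (bottom_marks n lam l m) =
    ((l, Suc k), T (l, Suc k)) # map (\<lambda>j. ((j, m j), T (j, m j))) (filter (\<lambda>j. 1 \<le> m j) [Suc l..<lam 1 + 1])"
proof -
  have "[l..<lam 1 + 1] = l # [Suc l..<lam 1 + 1]" using l_le by (simp add: upt_conv_Cons)
  then show ?thesis
    using assms scan_seq_bottom_marks[of l lam m n T] by (simp add: scan_invariant_def)
qed

lemma scan_invariant_unmarked_le:
  assumes inv: "scan_invariant n lam T l z (Suc k) m" and "z < T (l, Suc k)"
    and j: "l \<le> j" "j \<le> lam 1" "1 \<le> i" "i \<le> m j"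
  shows "T (j, i) \<le> T (l, Suc k)"
proof -
  have "T (j, i) = z \<or> (\<exists>i'. 1 \<le> i' \<and> i' \<le> Suc k \<and> T (l, i') = T (j, i))"
    using inv j by (simp add: scan_invariant_def)
  moreover have "T (l, i') \<le> T (l, Suc k)" if "1 \<le> i'" "i' \<le> Suc k" for i'
    using that columns_strict[of l i' "Suc k"] inv l_le
    by (cases "i' = Suc k") (auto simp: scan_invariant_def)
  ultimately show ?thesis using assms(2) by auto (metis)
qed

lemma scan_invariant_mark_bottoms:
  assumes inv: "scan_invariant n lam T l z (Suc k) m" and zv: "z < T (l, Suc k)"
  shows "scan_invariant n lam T l z k (mark_bottoms l lam (\<lambda>j. T (j, m j) = T (l, Suc k)) m)"
    (is "scan_invariant n lam T l z k ?m'")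
  unfolding scan_invariant_def
proof (intro conjI allI impI)
  let ?v = "T (l, Suc k)"
  have ml: "m l = Suc k" and mz: "\<And>j. l \<le> j \<Longrightarrow> j \<le> lam 1 \<Longrightarrow> m j \<le> zeta n lam j"
    using inv by (auto simp: scan_invariant_def)
  show "?m' l = k" using ml l_le by (simp add: mark_bottoms_def)
  show "?m' j \<le> zeta n lam j" if "l \<le> j \<and> j \<le> lam 1" for j
    using mz[of j] that by (auto simp: mark_bottoms_def)
  fix j i assume a: "l \<le> j \<and> j \<le> lam 1 \<and> 1 \<le> i \<and> i \<le> ?m' j"
  then have i: "i \<le> m j" and below: "T (j, m j) = ?v \<Longrightarrow> i < m j"
    by (auto simp: mark_bottoms_def split: if_splits)
  have "T (j, i) \<noteq> ?v"
  proof (cases "i = m j")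
    case False
    then have "T (j, i) < T (j, m j)" using columns_strict[of j i "m j"] a i mz[of j] by simp
    then show ?thesis using scan_invariant_unmarked_le[OF inv zv, of j "m j"] a i by simp
  qed (use below in auto)
  moreover have "T (j, i) = z \<or> (\<exists>i'. 1 \<le> i' \<and> i' \<le> Suc k \<and> T (l, i') = T (j, i))"
    using inv a i by (simp add: scan_invariant_def)
  ultimately show "T (j, i) = z \<or> (\<exists>i'. 1 \<le> i' \<and> i' \<le> k \<and> T (l, i') = T (j, i))"
    using le_Suc_eq by fastforce
qed

lemma scan_step:
  assumes inv: "scan_invariant n lam T l z (Suc k) m" and zv: "z < T (l, Suc k)"
  defines "e \<equiv> ewis (scan_seq n lam T l (bottom_marks n lam l m))"
    and "m' \<equiv> mark_bottoms l lam (\<lambda>j. T (j, m j) = T (l, Suc k)) m"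
  shows "snd (last e) = T (l, Suc k)"
    and "bottom_marks n lam l m \<union> set (map fst e) = bottom_marks n lam l m'"
    and "scan_invariant n lam T l z k m'"
proof -
  let ?v = "T (l, Suc k)"
  let ?rest = "map (\<lambda>j. ((j, m j), T (j, m j))) (filter (\<lambda>j. 1 \<le> m j) [Suc l..<lam 1 + 1])"
  have ml: "m l = Suc k" and mz: "\<And>j. l \<le> j \<Longrightarrow> j \<le> lam 1 \<Longrightarrow> m j \<le> zeta n lam j"
    using inv by (auto simp: scan_invariant_def)
  have bound: "\<forall>q\<in>set ?rest. snd q \<le> ?v"
    using scan_invariant_unmarked_le[OF inv zv] l_le by auto
  have e: "e = filter (\<lambda>q. snd q = ?v) (((l, Suc k), ?v) # ?rest)"
    unfolding e_def scan_seq_bottom_marks_Cons[OF inv] using ewis_eq_filter_max[of ?rest "((l, Suc k), ?v)"] bound by simp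
  then have "e \<noteq> []" "\<forall>q\<in>set e. snd q = ?v" by auto
  then show "snd (last e) = ?v" by (metis last_in_set)
  have "set (map fst e) = {(j, m j) | j. l \<le> j \<and> j \<le> lam 1 \<and> 1 \<le> m j \<and> T (j, m j) = ?v}"
  proof (intro equalityI subsetI)
    fix p assume "p \<in> set (map fst e)"
    then show "p \<in> {(j, m j) | j. l \<le> j \<and> j \<le> lam 1 \<and> 1 \<le> m j \<and> T (j, m j) = ?v}"
      unfolding e using ml l_le by auto
  next
    fix p assume "p \<in> {(j, m j) | j. l \<le> j \<and> j \<le> lam 1 \<and> 1 \<le> m j \<and> T (j, m j) = ?v}"
    then obtain j where "p = (j, m j)" "l \<le> j" "j \<le> lam 1" "1 \<le> m j" "T (j, m j) = ?v" by blast
    then show "p \<in> set (map fst e)"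
      unfolding e using ml by (cases "j = l") (auto simp: image_iff simp del: upt_Suc)
  qed
  then show marks: "bottom_marks n lam l m \<union> set (map fst e) = bottom_marks n lam l m'"
    unfolding m'_def using bottom_marks_mark_bottoms[of l lam m n] mz by simp
  show "scan_invariant n lam T l z k m'"
    unfolding m'_def by (rule scan_invariant_mark_bottoms[OF inv zv])
qed

lemma scan_iter_bottom_marks_eq:
  "scan_invariant n lam T l z k m \<Longrightarrow> 1 \<le> i \<Longrightarrow> i \<le> k \<Longrightarrow> (\<And>i'. i \<le> i' \<Longrightarrow> i' \<le> k \<Longrightarrow> z < T (l, i'))
    \<Longrightarrow> scan_iter n lam T l k (bottom_marks n lam l m) i = T (l, i)"
proof (induction k arbitrary: m)
  case (Suc k)
  have zv: "z < T (l, Suc k)" using Suc.prems by simp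
  show ?case
  proof (cases "i = Suc k")
    case True
    then show ?thesis using scan_step(1)[OF Suc.prems(1) zv] by (simp add: scan_iter_Suc_top)
  next
    case False
    then show ?thesis
      using scan_step(2,3)[OF Suc.prems(1) zv] Suc.IH Suc.prems(2-4)
      by (simp add: scan_iter_Suc_below)
  qed
qed simp

lemma scan_iter_bottom_marks_ge:
  "scan_invariant n lam T l z k m \<Longrightarrow> l + 1 \<le> lam 1 \<Longrightarrow> 1 \<le> pz \<Longrightarrow> pz \<le> m (l + 1) \<Longrightarrow> T (l + 1, pz) = z
    \<Longrightarrow> 1 \<le> i \<Longrightarrow> i \<le> k \<Longrightarrow> (\<And>i'. i < i' \<Longrightarrow> i' \<le> k \<Longrightarrow> z < T (l, i'))
    \<Longrightarrow> z \<le> scan_iter n lam T l k (bottom_marks n lam l m) i"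
proof (induction k arbitrary: m)
  case (Suc k)
  note inv = Suc.prems(1)
  show ?case
  proof (cases "i = Suc k")
    case True
    have "m (l + 1) \<le> zeta n lam (l + 1)" using inv Suc.prems(2) by (simp add: scan_invariant_def)
    then have "z \<le> T (l + 1, m (l + 1))"
      using Suc.prems(2-5) columns_strict[of "l + 1" pz "m (l + 1)"]
      by (cases "pz = m (l + 1)") (auto intro: less_imp_le)
    also have "\<dots> \<le> snd (last (ewis (scan_seq n lam T l (bottom_marks n lam l m))))"
    proof -
      have "((l + 1, m (l + 1)), T (l + 1, m (l + 1))) \<in> set (scan_seq n lam T l (bottom_marks n lam l m))"
        using Suc.prems(2-4) by (simp add: scan_seq_bottom_marks_Cons[OF inv] del: upt_Suc)
      from ewis_last_ge[OF this] show ?thesis by simp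
    qed
    finally show ?thesis unfolding True scan_iter_Suc_top .
  next
    case False
    then have zv: "z < T (l, Suc k)" using Suc.prems(6-8) by simp
    have "pz \<le> mark_bottoms l lam (\<lambda>j. T (j, m j) = T (l, Suc k)) m (l + 1)"
      using Suc.prems(4,5) zv by (intro le_mark_bottoms) (auto simp: le_less)
    then show ?thesis
      using False scan_step(2,3)[OF inv zv] Suc.IH Suc.prems(2,3,5-8)
      by (simp add: scan_iter_Suc_below)
  qed
qed simp

end

lemma scanning_eq_scan_iter:
  "(l, k) \<in> boxes n lam \<Longrightarrow>
    scanning n lam T (l, k) = scan_iter n lam T l (zeta n lam l) (bottom_marks n lam l (zeta n lam)) k"
  by (simp add: scanning_def bottom_marks_zeta)

lemma scan_invariant_column_tableau:
  assumes shape: "columns_of_shape n lam C" and l: "1 \<le> l" "l \<le> lam 1"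
    and sub: "\<And>j. l \<le> j \<Longrightarrow> j \<le> lam 1 \<Longrightarrow> C j \<subseteq> insert z (C l)"
  shows "scan_invariant n lam (column_tableau n lam C) l (int z) (zeta n lam l) (zeta n lam)"
  unfolding scan_invariant_def
proof (intro conjI allI impI refl order_refl)
  fix j i assume a: "l \<le> j \<and> j \<le> lam 1 \<and> 1 \<le> i \<and> i \<le> zeta n lam j"
  then have "(j, i) \<in> boxes n lam" using l by (simp add: boxes_def)
  then obtain a where "a \<in> C j" and Tji: "column_tableau n lam C (j, i) = int a"
    using column_tableau_mem[OF shape] by blast
  then have "a = z \<or> a \<in> C l" using sub a by blast
  then show "column_tableau n lam C (j, i) = int z \<or>
      (\<exists>i'. 1 \<le> i' \<and> i' \<le> zeta n lam l \<and> column_tableau n lam C (l, i') = column_tableau n lam C (j, i))"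
    using column_tableau_entryE[OF shape l] Tji by metis
qed

lemma scanning_column_tableau:
  assumes shape: "columns_of_shape n lam C" and nested: "nested_columns lam C"
  shows "scanning n lam (column_tableau n lam C) = column_tableau n lam C"
proof
  fix p :: "nat \<times> nat"
  obtain l k where p: "p = (l, k)" by force
  show "scanning n lam (column_tableau n lam C) p = column_tableau n lam C p"
  proof (cases "p \<in> boxes n lam")
    case False
    then show ?thesis using p by (simp add: scanning_def column_tableau_outside)
  next
    case True
    then have l: "1 \<le> l" "l \<le> lam 1" and k: "1 \<le> k" "k \<le> zeta n lam l"
      using p by (auto simp: boxes_def)
    have "scan_invariant n lam (column_tableau n lam C) l (int 0) (zeta n lam l) (zeta n lam)"
      using nested l by (intro scan_invariant_column_tableau[OF shape l]) (auto simp: nested_columns_def)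
    moreover have "int 0 < column_tableau n lam C (l, i)" if "1 \<le> i" "i \<le> zeta n lam l" for i
      using column_tableau_mem[OF shape, of l i] columns_of_shapeD(2)[OF shape l] that l
      by (force simp: boxes_def)
    moreover have "column_tableau n lam C (j, i) < column_tableau n lam C (j, i')"
      if "l \<le> j" "j \<le> lam 1" "1 \<le> i" "i < i'" "i' \<le> zeta n lam j" for j i i'
      using column_tableau_strict[OF shape] that l by simp
    ultimately show ?thesis
      using True p k l(2) scan_iter_bottom_marks_eq[of l lam n "column_tableau n lam C"]
      by (simp add: scanning_eq_scan_iter)
  qed
qed

lemma column_tableau_in_Dset:
  assumes "columns_of_shape n lam C" "nested_columns lam C"
    and "\<And>p. p \<in> boxes n lam \<Longrightarrow> column_tableau n lam C p \<le> key n lam \<pi> p"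
  shows "column_tableau n lam C \<in> Dset n lam \<pi>"
  using assms column_tableau_in_tableaux scanning_column_tableau by (simp add: Dset_def tab_le_def)

lemma scanning_column_tableau_ge:
  assumes shape: "columns_of_shape n lam C" and l: "1 \<le> l" "l + 1 \<le> lam 1"
    and sub: "\<And>j. l \<le> j \<Longrightarrow> j \<le> lam 1 \<Longrightarrow> C j \<subseteq> insert z (C l)" and z: "z \<in> C (l + 1)"
    and i: "1 \<le> i" "i \<le> zeta n lam l"
    and above: "\<And>i'. i < i' \<Longrightarrow> i' \<le> zeta n lam l \<Longrightarrow> int z < column_tableau n lam C (l, i')"
  shows "int z \<le> scanning n lam (column_tableau n lam C) (l, i)"
proof -
  have inv: "scan_invariant n lam (column_tableau n lam C) l (int z) (zeta n lam l) (zeta n lam)"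
    using l sub by (intro scan_invariant_column_tableau[OF shape]) auto
  obtain pz where "1 \<le> pz" "pz \<le> zeta n lam (l + 1)" "column_tableau n lam C (l + 1, pz) = int z"
    using column_tableau_entryE[OF shape _ l(2) z] by auto
  then show ?thesis
    using scan_iter_bottom_marks_ge[OF _ _ inv] column_tableau_strict[OF shape] l i above
    by (simp add: scanning_eq_scan_iter boxes_def)
qed

(* At row i0 = #{a \<in> C l. a < z} the key entry of column l is below z, while the scanning
   of column l reaches the z of column l + 1. *)
lemma column_tableau_not_in_Dset:
  assumes shape: "columns_of_shape n lam C" and l: "1 \<le> l" "l + 1 \<le> lam 1"
    and key_col: "C l = \<pi> ` {1..zeta n lam l}"
    and sub: "\<And>j. l \<le> j \<Longrightarrow> j \<le> lam 1 \<Longrightarrow> C j \<subseteq> insert z (C l)"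
    and z: "z \<in> C (l + 1)" "z \<notin> C l" and u: "u \<in> C l" "u < z"
  shows "column_tableau n lam C \<notin> Dset n lam \<pi>"
proof
  assume D: "column_tableau n lam C \<in> Dset n lam \<pi>"
  define i0 where "i0 = card {a \<in> C l. a < z}"
  have card: "card (C l) = zeta n lam l" "finite (C l)"
    using columns_of_shapeD[OF shape] l by auto
  have "0 < i0" using u card(2) by (auto simp: i0_def card_gt_0_iff)
  moreover have "i0 \<le> card (C l)" unfolding i0_def using card(2) by (intro card_mono) auto
  ultimately have i0: "1 \<le> i0" "i0 \<le> zeta n lam l" using card(1) by auto
  have nth_less: "sorted_list_of_set (C l) ! (i - 1) < z \<longleftrightarrow> i \<le> i0"
    if "1 \<le> i" "i \<le> zeta n lam l" for i
    using sorted_list_of_set_nth_less_iff_card_less[of "i - 1" "C l" z] that card z(2)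
    unfolding i0_def by linarith
  have box: "(l, i) \<in> boxes n lam" if "1 \<le> i" "i \<le> zeta n lam l" for i
    using that l by (simp add: boxes_def)
  have "int z \<le> scanning n lam (column_tableau n lam C) (l, i0)"
  proof (rule scanning_column_tableau_ge[OF shape l sub z(1) i0])
    fix i' assume "i0 < i'" "i' \<le> zeta n lam l"
    moreover have "i' - 1 < card (C l)" using card(1) i0(1) \<open>i' \<le> zeta n lam l\<close> \<open>i0 < i'\<close> by linarith
    then have "sorted_list_of_set (C l) ! (i' - 1) \<noteq> z"
      using sorted_list_of_set_nth_mem z(2) by metis
    ultimately show "int z < column_tableau n lam C (l, i')"
      using nth_less[of i'] box[of i'] i0 by (simp add: column_tableau_box)
  qed
  also have "\<dots> \<le> key n lam \<pi> (l, i0)"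
    using D box[OF i0] by (simp add: Dset_def tab_le_def)
  also have "\<dots> < int z"
    using nth_less[OF i0] box[OF i0] key_col by (simp add: key_eq_column_tableau column_tableau_box)
  finally show False by simp
qed

section \<open>Lowering injections\<close>

definition lowering_injection :: "nat set \<Rightarrow> nat set \<Rightarrow> (nat \<Rightarrow> nat) \<Rightarrow> bool" where
  "lowering_injection S Q \<phi> \<longleftrightarrow> inj_on \<phi> S \<and> \<phi> ` S \<subseteq> Q \<and> (\<forall>u\<in>S. \<phi> u \<le> u)"

(* Since y is missing from S, the elements of S in (y, w] can each move down to their
   predecessor in Q; this frees w, and the least element v of S above w moves down to x. *)
lemma lowering_injection_shift_down:
  fixes Q S :: "nat set"
  assumes fin: "finite Q" and SQ: "S \<subseteq> Q" and y: "y \<in> Q" "y \<notin> S" "y \<le> w"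
    and v: "v \<in> S" "w < v" "\<forall>s\<in>S. w < s \<longrightarrow> v \<le> s"
    and x: "x \<in> Q" "w < x" "x \<le> v"
  defines "\<phi> \<equiv> \<lambda>u. if y < u \<and> u \<le> w then Max {u' \<in> Q. u' < u} else if u = v then x else u"
  shows "lowering_injection S Q \<phi>" "w \<notin> \<phi> ` S" "\<phi> v = x"
proof -
  define pred where "pred u = Max {u' \<in> Q. u' < u}" for u
  have pred_in: "pred u \<in> {u' \<in> Q. u' < u}" if "y < u" for u
    unfolding pred_def by (rule Max_in) (use fin y that in auto)
  have pred_ge: "u' \<le> pred u" if "u' \<in> Q" "u' < u" for u u'
    unfolding pred_def by (rule Max_ge) (use fin that in auto)
  have low: "y \<le> pred u" "pred u < w" "pred u \<in> Q" if "y < u" "u \<le> w" for u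
    using pred_in[OF that(1)] pred_ge[OF y(1) that(1)] that by auto
  have shifted: "y < u \<and> u \<le> w \<and> \<phi> u = pred u \<or> u = v \<and> \<phi> u = x \<or> \<phi> u = u \<and> (u < y \<or> v < u)"
    if "u \<in> S" for u
  proof (cases "y < u \<and> u \<le> w")
    case False
    have "u \<noteq> y" using that y(2) by auto
    then have "u < y \<or> w < u" using False by auto
    then show ?thesis using False v(3) that unfolding \<phi>_def by auto
  qed (simp add: \<phi>_def pred_def)
  have "inj_on \<phi> S"
  proof (rule inj_onI)
    have "\<not> u1 < u2" if "u1 \<in> S" "u2 \<in> S" "\<phi> u1 = \<phi> u2" for u1 u2
    proof
      assume "u1 < u2"
      from shifted[OF that(1)] shifted[OF that(2)] show False
      proof (elim disjE conjE)
      qed (use that \<open>u1 < u2\<close> y(3) v(2) x low[of u1] low[of u2] pred_in[of u1] pred_ge[of u1 u2] SQ in \<open>auto\<close>)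
    qed
    then show "u1 = u2" if "u1 \<in> S" "u2 \<in> S" "\<phi> u1 = \<phi> u2" for u1 u2
      using that by (metis linorder_neqE_nat)
  qed
  moreover have "\<phi> u \<in> Q" "\<phi> u \<le> u" if "u \<in> S" for u
    using shifted[OF that] low[of u] pred_in[of u] that SQ x(1,3) by auto
  ultimately show "lowering_injection S Q \<phi>" by (auto simp: lowering_injection_def)
  show "w \<notin> \<phi> ` S"
  proof
    assume "w \<in> \<phi> ` S"
    then obtain u where "u \<in> S" "\<phi> u = w" by blast
    then show False using shifted[of u] low[of u] y(3) v(2) x(2) by auto
  qed
  show "\<phi> v = x" using v(2) by (simp add: \<phi>_def)
qed

lemma exists_shift_map:
  fixes Q S :: "nat set"
  assumes fin: "finite Q" and SQ: "S \<subseteq> Q" and y: "y \<in> Q" "y \<notin> S" "y < z"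
    and z: "z \<notin> Q" and v: "v \<in> S" "z < v"
  obtains w x \<phi> where "w \<in> Q" "x \<in> Q" "w < z" "z < x" "\<And>u. u \<in> Q \<Longrightarrow> u \<le> w \<or> x \<le> u"
    "lowering_injection S Q \<phi>" "w \<notin> \<phi> ` S" "x \<in> \<phi> ` S"
proof -
  define w where "w = Max {u \<in> Q. u < z}"
  define x where "x = Min {u \<in> Q. z < u}"
  define v1 where "v1 = Min {s \<in> S. z < s}"
  have "w \<in> {u \<in> Q. u < z}" unfolding w_def by (rule Max_in) (use fin y in auto)
  moreover have w_max: "u \<le> w" if "u \<in> Q" "u < z" for u
    unfolding w_def by (rule Max_ge) (use fin that in auto)
  ultimately have w: "w \<in> Q" "w < z" "y \<le> w" using y by auto
  have "x \<in> {u \<in> Q. z < u}" unfolding x_def by (rule Min_in) (use fin v SQ in auto)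
  moreover have x_min: "x \<le> u" if "u \<in> Q" "z < u" for u
    unfolding x_def by (rule Min_le) (use fin that in auto)
  ultimately have x: "x \<in> Q" "z < x" by auto
  have "v1 \<in> {s \<in> S. z < s}" unfolding v1_def
    by (rule Min_in) (use finite_subset[OF SQ fin] v in auto)
  moreover have v1_min: "v1 \<le> s" if "s \<in> S" "z < s" for s
    unfolding v1_def by (rule Min_le) (use finite_subset[OF SQ fin] that in auto)
  ultimately have v1: "v1 \<in> S" "z < v1" by auto
  have gap: "u \<le> w \<or> x \<le> u" if "u \<in> Q" for u
    using w_max x_min that z by (metis linorder_neqE_nat)
  have "\<forall>s\<in>S. w < s \<longrightarrow> v1 \<le> s"
  proof (intro ballI impI)
    fix s assume "s \<in> S" "w < s"
    then have "\<not> s < z" "s \<noteq> z" using w_max[of s] SQ z by auto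
    then show "v1 \<le> s" using v1_min[OF \<open>s \<in> S\<close>] by simp
  qed
  moreover have "x \<le> v1" using x_min v1 SQ by blast
  ultimately obtain \<phi> where "lowering_injection S Q \<phi>" "w \<notin> \<phi> ` S" "\<phi> v1 = x"
    using lowering_injection_shift_down[OF fin SQ y(1,2) w(3) v1(1) order.strict_trans[OF w(2) v1(2)] _ x(1)
        order.strict_trans[OF w(2) x(2)]] by blast
  then show thesis using that w x gap v1(1) by (metis image_eqI)
qed

lemma lowering_injection_replace:
  assumes low: "lowering_injection S Q \<phi>" and e: "e \<notin> \<phi> ` S" "e \<le> x"
  shows "lowering_injection S (insert e Q) ((\<lambda>t. if t = x then e else t) \<circ> \<phi>)"
    and "x \<in> \<phi> ` S \<Longrightarrow> e \<in> ((\<lambda>t. if t = x then e else t) \<circ> \<phi>) ` S"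
proof -
  let ?\<psi> = "(\<lambda>t. if t = x then e else t) \<circ> \<phi>"
  have "inj_on ?\<psi> S"
  proof (rule inj_onI)
    fix u v assume "u \<in> S" "v \<in> S" "?\<psi> u = ?\<psi> v"
    then have "\<phi> u = \<phi> v" using e(1) by (auto split: if_splits)
    then show "u = v" using low \<open>u \<in> S\<close> \<open>v \<in> S\<close> unfolding lowering_injection_def by (meson inj_onD)
  qed
  then show "lowering_injection S (insert e Q) ?\<psi>"
    using low e(2) by (fastforce simp: lowering_injection_def)
  show "e \<in> ?\<psi> ` S" if "x \<in> \<phi> ` S" using that by force
qed

section \<open>Twisted keys\<close>

lemma zeta_antimono: "j \<le> j' \<Longrightarrow> zeta n lam j' \<le> zeta n lam j"
  unfolding zeta_def by (rule card_mono) auto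

lemma zeta_le: "zeta n lam j \<le> n"
proof -
  have "zeta n lam j \<le> card {1..n}" unfolding zeta_def by (rule card_mono) auto
  then show ?thesis by simp
qed

lemma card_image_atLeastAtMost:
  "inj_on \<pi> {1..n} \<Longrightarrow> t \<le> n \<Longrightarrow> card (\<pi> ` {1..t}) = t"
  by (subst card_image) (auto intro: inj_on_subset)

definition twisted_key_columns ::
    "nat \<Rightarrow> (nat \<Rightarrow> nat) \<Rightarrow> (nat \<Rightarrow> nat) \<Rightarrow> nat \<Rightarrow> (nat \<Rightarrow> nat) \<Rightarrow> nat \<Rightarrow> nat set" where
  "twisted_key_columns n lam \<pi> q \<psi> j =
     (if q \<le> zeta n lam j then \<pi> ` {1..zeta n lam j} else \<psi> ` \<pi> ` {1..zeta n lam j})"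

context
  fixes n :: nat and lam \<pi> :: "nat \<Rightarrow> nat" and p q :: nat
  assumes inj: "inj_on \<pi> {1..n}"
    and heights: "\<And>j. 1 \<le> j \<Longrightarrow> j \<le> lam 1 \<Longrightarrow> zeta n lam j \<le> p \<or> q \<le> zeta n lam j"
begin

lemma twisted_key_columns_of_shape:
  assumes "\<pi> ` {1..n} \<subseteq> {1..n}" "\<psi> ` \<pi> ` {1..p} \<subseteq> {1..n}" and inj_twist: "inj_on \<psi> (\<pi> ` {1..p})"
  shows "columns_of_shape n lam (twisted_key_columns n lam \<pi> q \<psi>)"
  unfolding columns_of_shape_def
proof (intro allI impI)
  fix j assume j: "1 \<le> j \<and> j \<le> lam 1"
  let ?K = "\<pi> ` {1..zeta n lam j}"
  have K: "card ?K = zeta n lam j" "?K \<subseteq> {1..n}"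
    using card_image_atLeastAtMost[OF inj zeta_le] assms(1) zeta_le[of n lam j] by auto
  show "card (twisted_key_columns n lam \<pi> q \<psi> j) = zeta n lam j \<and>
      twisted_key_columns n lam \<pi> q \<psi> j \<subseteq> {1..n}"
  proof (cases "q \<le> zeta n lam j")
    case False
    then have "zeta n lam j \<le> p" using heights[of j] j by auto
    then have sub: "?K \<subseteq> \<pi> ` {1..p}" by auto
    have "card (\<psi> ` ?K) = zeta n lam j"
      using card_image[OF inj_on_subset[OF inj_twist sub]] K by simp
    then show ?thesis using False sub assms(2) by (auto simp: twisted_key_columns_def)
  qed (use K in \<open>simp add: twisted_key_columns_def\<close>)
qed

lemma twisted_key_columns_nested:
  assumes "\<psi> ` \<pi> ` {1..p} \<subseteq> \<pi> ` {1..q}"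
  shows "nested_columns lam (twisted_key_columns n lam \<pi> q \<psi>)"
  unfolding nested_columns_def
proof (intro allI impI)
  fix j j' assume a: "1 \<le> j \<and> j \<le> j' \<and> j' \<le> lam 1"
  then have z: "zeta n lam j' \<le> zeta n lam j" by (simp add: zeta_antimono)
  show "twisted_key_columns n lam \<pi> q \<psi> j' \<subseteq> twisted_key_columns n lam \<pi> q \<psi> j"
  proof (cases "q \<le> zeta n lam j'")
    case False
    then have "zeta n lam j' \<le> p" using heights[of j'] a by auto
    then have "\<psi> ` \<pi> ` {1..zeta n lam j'} \<subseteq> \<pi> ` {1..zeta n lam j}" if "q \<le> zeta n lam j"
      using assms that by fastforce
    then show ?thesis using False z by (auto simp: twisted_key_columns_def)
  qed (use z in \<open>auto simp: twisted_key_columns_def\<close>)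
qed

lemma column_tableau_twisted_key_le_key:
  assumes "lowering_injection (\<pi> ` {1..p}) Q \<psi>" and box: "(j, i) \<in> boxes n lam"
  shows "column_tableau n lam (twisted_key_columns n lam \<pi> q \<psi>) (j, i) \<le> key n lam \<pi> (j, i)"
proof (cases "q \<le> zeta n lam j")
  case False
  let ?K = "\<pi> ` {1..zeta n lam j}"
  have "zeta n lam j \<le> p" using False heights box by (force simp: boxes_def)
  then have sub: "?K \<subseteq> \<pi> ` {1..p}" by auto
  have "sorted_list_of_set (\<psi> ` ?K) ! (i - 1) \<le> sorted_list_of_set ?K ! (i - 1)"
    using sub assms box card_image_atLeastAtMost[OF inj zeta_le]
    by (intro sorted_list_of_set_nth_image_le) (auto simp: boxes_def lowering_injection_def intro: inj_on_subset)
  then show ?thesis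
    using False box by (simp add: key_eq_column_tableau column_tableau_box twisted_key_columns_def)
qed (simp add: key_eq_column_tableau column_tableau_def twisted_key_columns_def)

lemma twisted_key_in_Dset:
  assumes "\<pi> ` {1..n} \<subseteq> {1..n}" "q \<le> n" and low: "lowering_injection (\<pi> ` {1..p}) (\<pi> ` {1..q}) \<psi>"
  shows "column_tableau n lam (twisted_key_columns n lam \<pi> q \<psi>) \<in> Dset n lam \<pi>"
proof (rule column_tableau_in_Dset)
  have "\<pi> ` {1..q} \<subseteq> {1..n}" using assms(1,2) by auto
  then have range: "\<psi> ` \<pi> ` {1..p} \<subseteq> {1..n}" using low unfolding lowering_injection_def by blast
  show "columns_of_shape n lam (twisted_key_columns n lam \<pi> q \<psi>)"
    using low by (intro twisted_key_columns_of_shape[OF assms(1) range]) (simp add: lowering_injection_def)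
  show "nested_columns lam (twisted_key_columns n lam \<pi> q \<psi>)"
    using low by (intro twisted_key_columns_nested) (simp add: lowering_injection_def)
  show "column_tableau n lam (twisted_key_columns n lam \<pi> q \<psi>) P \<le> key n lam \<pi> P"
    if "P \<in> boxes n lam" for P
    using that column_tableau_twisted_key_le_key[OF low, of "fst P" "snd P"] by simp
qed

lemma twisted_key_not_in_Dset:
  assumes "\<pi> ` {1..n} \<subseteq> {1..n}" and pq: "p < q"
    and l: "1 \<le> l" "l + 1 \<le> lam 1" "zeta n lam l = q" "zeta n lam (l + 1) = p"
    and low: "lowering_injection (\<pi> ` {1..p}) (insert z (\<pi> ` {1..q})) \<psi>" and z_twist: "z \<in> \<psi> ` \<pi> ` {1..p}"
    and z: "z \<notin> \<pi> ` {1..q}" "z \<le> n" and u: "u \<in> \<pi> ` {1..q}" "u < z"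
  shows "column_tableau n lam (twisted_key_columns n lam \<pi> q \<psi>) \<notin> Dset n lam \<pi>"
proof -
  let ?C = "twisted_key_columns n lam \<pi> q \<psi>"
  have "q \<le> n" using l(3) zeta_le by metis
  then have "\<pi> ` {1..q} \<subseteq> {1..n}" using assms(1) by auto
  then have "insert z (\<pi> ` {1..q}) \<subseteq> {1..n}" using z(2) u(2) by auto
  then have range: "\<psi> ` \<pi> ` {1..p} \<subseteq> {1..n}" using low unfolding lowering_injection_def by blast
  have shape: "columns_of_shape n lam ?C"
    using low by (intro twisted_key_columns_of_shape[OF assms(1) range]) (simp add: lowering_injection_def)
  have C_l: "?C l = \<pi> ` {1..q}" and C_l1: "?C (l + 1) = \<psi> ` \<pi> ` {1..p}"
    using l pq by (simp_all add: twisted_key_columns_def)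
  have sub: "?C j \<subseteq> insert z (?C l)" if "l \<le> j" "j \<le> lam 1" for j
  proof (cases "q \<le> zeta n lam j")
    case True
    then have "zeta n lam j = q" using zeta_antimono[OF that(1), of n lam] l(3) by simp
    then show ?thesis using C_l by (auto simp: twisted_key_columns_def)
  next
    case False
    then have "zeta n lam j \<le> p" using heights[of j] that l(1) by simp
    then have "?C j \<subseteq> \<psi> ` \<pi> ` {1..p}"
      unfolding twisted_key_columns_def if_not_P[OF False] by (intro image_mono) auto
    also have "\<dots> \<subseteq> insert z (\<pi> ` {1..q})" using low by (simp add: lowering_injection_def)
    finally show ?thesis using C_l by simp
  qed
  show ?thesis
  proof (rule column_tableau_not_in_Dset[OF shape l(1,2)])
    show "?C l = \<pi> ` {1..zeta n lam l}" using C_l l(3) by simp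
    show "z \<in> ?C (l + 1)" using C_l1 z_twist by simp
  qed (fact sub | use C_l z(1) u in simp)+
qed

end

lemma convex_polytope_Z_convex_combination:
  assumes "convex_polytope_Z B D" "U \<in> D" "V \<in> D" "0 \<le> \<alpha>" "0 \<le> \<beta>" "\<alpha> + \<beta> = 1"
    and W: "\<And>p. real_of_int (W p) = \<alpha> * real_of_int (U p) + \<beta> * real_of_int (V p)"
  shows "W \<in> D"
proof -
  obtain A :: "((nat \<times> nat \<Rightarrow> real) \<times> real) set" where
    D: "D = {x. (\<forall>p. p \<notin> B \<longrightarrow> x p = 0) \<and> (\<forall>(a, b) \<in> A. (\<Sum>p \<in> B. a p * real_of_int (x p)) \<le> b)}"
    using assms(1) unfolding convex_polytope_Z_def by blast
  have "W p = 0" if "p \<notin> B" for p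
  proof -
    have "U p = 0" "V p = 0" using assms(2,3) that unfolding D by blast+
    then show ?thesis using W[of p] by simp
  qed
  moreover have "(\<Sum>p \<in> B. a p * real_of_int (W p)) \<le> b" if "(a, b) \<in> A" for a b
  proof -
    have "(\<Sum>p \<in> B. a p * real_of_int (W p)) =
        \<alpha> * (\<Sum>p \<in> B. a p * real_of_int (U p)) + \<beta> * (\<Sum>p \<in> B. a p * real_of_int (V p))"
      by (simp add: W sum.distrib sum_distrib_left algebra_simps)
    also have "\<dots> \<le> \<alpha> * b + \<beta> * b"
      using assms(2-5) that unfolding D by (intro add_mono mult_left_mono) auto
    also have "\<dots> = b" using assms(6) by (metis distrib_right mult_1)
    finally show ?thesis .
  qed
  ultimately show ?thesis unfolding D by blast
qed

context
  fixes n :: nat and lam \<pi> \<phi> :: "nat \<Rightarrow> nat" and p q w x :: nat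
  assumes inj: "inj_on \<pi> {1..n}"
    and heights: "\<And>j. 1 \<le> j \<Longrightarrow> j \<le> lam 1 \<Longrightarrow> zeta n lam j \<le> p \<or> q \<le> zeta n lam j"
    and inj_\<phi>: "inj_on \<phi> (\<pi> ` {1..p})"
    and gap: "\<And>a. a \<in> \<phi> ` \<pi> ` {1..p} \<Longrightarrow> a \<noteq> x \<Longrightarrow> a < w \<or> x < a"
begin

lemma column_tableau_twisted_key_replace:
  assumes box: "(j, i) \<in> boxes n lam" and e: "w \<le> e" "e \<le> x"
  defines "s \<equiv> sorted_list_of_set (\<phi> ` \<pi> ` {1..zeta n lam j}) ! (i - 1)"
  shows "column_tableau n lam (twisted_key_columns n lam \<pi> q ((\<lambda>t. if t = x then e else t) \<circ> \<phi>)) (j, i) =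
    (if q \<le> zeta n lam j then key n lam \<pi> (j, i) else int (if s = x then e else s))"
proof (cases "q \<le> zeta n lam j")
  case False
  let ?A = "\<phi> ` \<pi> ` {1..zeta n lam j}"
  have "zeta n lam j \<le> p" using False heights box by (force simp: boxes_def)
  then have sub: "\<pi> ` {1..zeta n lam j} \<subseteq> \<pi> ` {1..p}" by auto
  have "card ?A = zeta n lam j"
    using card_image[OF inj_on_subset[OF inj_\<phi> sub]] card_image_atLeastAtMost[OF inj zeta_le] by simp
  moreover have "a < w \<or> x < a" if "a \<in> ?A" "a \<noteq> x" for a
    using gap[of a] sub that by blast
  ultimately have "sorted_list_of_set ((\<lambda>t. if t = x then e else t) ` ?A) ! (i - 1) = (if s = x then e else s)"
    using box e unfolding s_def by (intro sorted_list_of_set_nth_replace) (auto simp: boxes_def)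
  moreover have "twisted_key_columns n lam \<pi> q ((\<lambda>t. if t = x then e else t) \<circ> \<phi>) j =
      (\<lambda>t. if t = x then e else t) ` ?A"
    using False by (simp only: twisted_key_columns_def image_comp if_False comp_assoc)
  ultimately show ?thesis
    using False unfolding column_tableau_box[OF box] by simp
qed (simp add: key_eq_column_tableau column_tableau_def twisted_key_columns_def)

lemma twisted_key_interpolation:
  assumes wzx: "w < z" "z < x"
  defines "T \<equiv> \<lambda>e. column_tableau n lam (twisted_key_columns n lam \<pi> q ((\<lambda>t. if t = x then e else t) \<circ> \<phi>))"
  obtains \<alpha> \<beta> :: real where "0 \<le> \<alpha>" "0 \<le> \<beta>" "\<alpha> + \<beta> = 1"
    "\<And>P. real_of_int (T z P) = \<alpha> * real_of_int (T w P) + \<beta> * real_of_int (T x P)"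
proof
  define \<alpha> :: real where "\<alpha> = (real x - real z) / (real x - real w)"
  define \<beta> :: real where "\<beta> = (real z - real w) / (real x - real w)"
  show "0 \<le> \<alpha>" "0 \<le> \<beta>" "\<alpha> + \<beta> = 1"
    using wzx by (auto simp: \<alpha>_def \<beta>_def divide_simps)
  have affine: "real z = \<alpha> * real w + \<beta> * real x"
    using wzx by (simp add: \<alpha>_def \<beta>_def divide_simps) (simp add: algebra_simps)
  have convex: "r = \<alpha> * r + \<beta> * r" for r :: real
    using \<open>\<alpha> + \<beta> = 1\<close> by (metis distrib_right mult_1)
  show "real_of_int (T z P) = \<alpha> * real_of_int (T w P) + \<beta> * real_of_int (T x P)" for P
  proof (cases "P \<in> boxes n lam")
    case True
    then obtain j i where P: "P = (j, i)" "(j, i) \<in> boxes n lam" by (cases P) auto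
    show ?thesis
      using column_tableau_twisted_key_replace[OF P(2), of z] column_tableau_twisted_key_replace[OF P(2), of w]
        column_tableau_twisted_key_replace[OF P(2), of x] wzx affine convex
      unfolding P(1) T_def by auto
  qed (simp add: T_def column_tableau_outside)
qed

end

section \<open>The 312-pattern and the obstruction to convexity\<close>

lemma finite_Rset: "finite (Rset n lam)"
proof (rule finite_subset)
  show "Rset n lam \<subseteq> {..<n}" by (auto simp: Rset_def)
qed simp

lemma qR_eq_nth:
  assumes "1 \<le> h" "h \<le> rR n lam"
  shows "qR n lam h = sorted_list_of_set (Rset n lam) ! (h - 1)"
  using assms by (cases h) (auto simp: qR_def rR_def nth_append)

lemma qR_consecutive:
  assumes "1 \<le> h" "h + 1 \<le> rR n lam"
  shows "qR n lam h \<in> Rset n lam" "qR n lam (h + 1) \<in> Rset n lam" "qR n lam h < qR n lam (h + 1)"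
    and "\<And>t. t \<in> Rset n lam \<Longrightarrow> qR n lam h < t \<Longrightarrow> t < qR n lam (h + 1) \<Longrightarrow> False"
proof -
  let ?s = "sorted_list_of_set (Rset n lam)"
  have q: "qR n lam h = ?s ! (h - 1)" "qR n lam (h + 1) = ?s ! h"
    using assms qR_eq_nth[of h n lam] qR_eq_nth[of "h + 1" n lam] by simp_all
  have idx: "h - 1 < card (Rset n lam)" "h < card (Rset n lam)"
    using assms by (simp_all add: rR_def)
  show "qR n lam h \<in> Rset n lam" "qR n lam (h + 1) \<in> Rset n lam"
    using q idx sorted_list_of_set_nth_mem by metis+
  show "qR n lam h < qR n lam (h + 1)"
    using q idx sorted_list_of_set_nth_less_iff[of "h - 1" "Rset n lam" h] assms(1) by simp
  fix t assume t: "t \<in> Rset n lam" "qR n lam h < t" "t < qR n lam (h + 1)"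
  then obtain i where i: "i < card (Rset n lam)" "?s ! i = t"
    using sorted_list_of_set_nthE[OF finite_Rset] by metis
  then have "h - 1 < i" "i < h"
    using t q idx sorted_list_of_set_nth_less_iff by metis+
  then show False by simp
qed

lemma zeta_outside_gap:
  assumes "q < n" "\<And>t. t \<in> Rset n lam \<Longrightarrow> p < t \<Longrightarrow> t < q \<Longrightarrow> False" "1 \<le> j" "j \<le> lam 1"
  shows "zeta n lam j \<le> p \<or> q \<le> zeta n lam j"
  using assms(2)[of "zeta n lam j"] assms(1,3,4) by (force simp: Rset_def)

lemma consecutive_column_heights:
  assumes p: "p \<in> Rset n lam" and q: "q \<in> Rset n lam" and pq: "p < q"
    and heights: "\<And>j. 1 \<le> j \<Longrightarrow> j \<le> lam 1 \<Longrightarrow> zeta n lam j \<le> p \<or> q \<le> zeta n lam j"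
  obtains l where "1 \<le> l" "l + 1 \<le> lam 1" "zeta n lam l = q" "zeta n lam (l + 1) = p"
proof
  obtain jq where jq: "1 \<le> jq" "jq \<le> lam 1" "zeta n lam jq = q" using q by (auto simp: Rset_def)
  obtain jp where jp: "1 \<le> jp" "jp \<le> lam 1" "zeta n lam jp = p" using p by (auto simp: Rset_def)
  define L where "L = {j \<in> {1..lam 1}. q \<le> zeta n lam j}"
  define l where "l = Max L"
  have "finite L" "jq \<in> L" using jq by (auto simp: L_def)
  then have "l \<in> L" "jq \<le> l" and l_max: "\<And>j. j \<in> L \<Longrightarrow> j \<le> l"
    unfolding l_def using Max_in Max_ge by blast+
  then show "1 \<le> l" and l: "zeta n lam l = q"
    using zeta_antimono[of jq l n lam] jq by (auto simp: L_def)
  have "l < jp" using zeta_antimono[of jp l n lam] jp l pq by (metis leI not_le)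
  then show "l + 1 \<le> lam 1" using jp by simp
  then have "\<not> q \<le> zeta n lam (l + 1)" using l_max[of "l + 1"] by (auto simp: L_def)
  moreover have "p \<le> zeta n lam (l + 1)"
    using zeta_antimono[of "l + 1" jp n lam] \<open>l < jp\<close> jp by simp
  ultimately show "zeta n lam (l + 1) = p"
    using heights[of "l + 1"] \<open>l + 1 \<le> lam 1\<close> by simp
qed

lemma R_312_containing_witness:
  assumes "R_312_containing n lam \<pi>"
  obtains p q a b c l where "p < q" "1 \<le> a" "a \<le> p" "p < b" "b \<le> q" "q < c" "c \<le> n"
    "\<pi> b < \<pi> c" "\<pi> c < \<pi> a" "1 \<le> l" "l + 1 \<le> lam 1" "zeta n lam l = q" "zeta n lam (l + 1) = p"
    "\<And>j. 1 \<le> j \<Longrightarrow> j \<le> lam 1 \<Longrightarrow> zeta n lam j \<le> p \<or> q \<le> zeta n lam j"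
proof -
  obtain h a b c where h: "1 \<le> h" "h + 1 \<le> rR n lam"
    and abc: "1 \<le> a" "a \<le> qR n lam h" "qR n lam h < b" "b \<le> qR n lam (h + 1)"
      "qR n lam (h + 1) < c" "c \<le> n" "\<pi> b < \<pi> c" "\<pi> c < \<pi> a"
    using assms unfolding R_312_containing_def by auto
  note consecutive = qR_consecutive[OF h]
  have heights: "zeta n lam j \<le> qR n lam h \<or> qR n lam (h + 1) \<le> zeta n lam j"
    if "1 \<le> j" "j \<le> lam 1" for j
    using zeta_outside_gap[where n = n and lam = lam and p = "qR n lam h" and q = "qR n lam (h + 1)",
        OF _ consecutive(4) that]
      abc(5,6) by simp
  obtain l where "1 \<le> l" "l + 1 \<le> lam 1" "zeta n lam l = qR n lam (h + 1)"
    "zeta n lam (l + 1) = qR n lam h"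
    using consecutive_column_heights[OF consecutive(1-3) heights] by blast
  then show thesis
    using that[of "qR n lam h" "qR n lam (h + 1)" a b c l] consecutive(3) abc heights by blast
qed

lemma Dset_not_convex_polytope:
  fixes \<phi> :: "nat \<Rightarrow> nat" and w x z :: nat
  assumes inj: "inj_on \<pi> {1..n}" and img: "\<pi> ` {1..n} \<subseteq> {1..n}"
    and heights: "\<And>j. 1 \<le> j \<Longrightarrow> j \<le> lam 1 \<Longrightarrow> zeta n lam j \<le> p \<or> q \<le> zeta n lam j"
    and pq: "p < q" and l: "1 \<le> l" "l + 1 \<le> lam 1" "zeta n lam l = q" "zeta n lam (l + 1) = p"
    and low: "lowering_injection (\<pi> ` {1..p}) (\<pi> ` {1..q}) \<phi>"
    and \<phi>: "w \<notin> \<phi> ` \<pi> ` {1..p}" "x \<in> \<phi> ` \<pi> ` {1..p}"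
    and wx: "w \<in> \<pi> ` {1..q}" "w < z" "z < x"
    and gap: "\<And>u. u \<in> \<pi> ` {1..q} \<Longrightarrow> u \<le> w \<or> x \<le> u"
    and z: "z \<notin> \<pi> ` {1..q}" "z \<le> n"
  shows "\<not> convex_polytope_Z (boxes n lam) (Dset n lam \<pi>)"
proof
  assume convex: "convex_polytope_Z (boxes n lam) (Dset n lam \<pi>)"
  let ?Q = "\<pi> ` {1..q}" and ?S = "\<pi> ` {1..p}"
  define \<psi> where "\<psi> e = (\<lambda>t. if t = x then e else t) \<circ> \<phi>" for e
  define T where "T e = column_tableau n lam (twisted_key_columns n lam \<pi> q (\<psi> e))" for e
  have q_n: "q \<le> n" using l(3) zeta_le by metis
  have "z \<notin> \<phi> ` ?S" using low z(1) by (auto simp: lowering_injection_def)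
  then have low_z: "lowering_injection ?S (insert z ?Q) (\<psi> z)" "z \<in> \<psi> z ` ?S"
    using lowering_injection_replace[of ?S ?Q \<phi> z x] low \<phi>(2) wx(3) by (simp_all add: \<psi>_def)
  have low_w: "lowering_injection ?S ?Q (\<psi> w)"
    using lowering_injection_replace(1)[of ?S ?Q \<phi> w x] low \<phi>(1) wx by (simp add: \<psi>_def insert_absorb)
  have \<psi>_x: "\<psi> x = \<phi>" by (auto simp: \<psi>_def)
  have T_x: "T x \<in> Dset n lam \<pi>"
    unfolding T_def \<psi>_x by (rule twisted_key_in_Dset) (fact inj heights img q_n low)+
  have T_w: "T w \<in> Dset n lam \<pi>"
    unfolding T_def by (rule twisted_key_in_Dset) (fact inj heights img q_n low_w)+
  have gap_S: "a < w \<or> x < a" if "a \<in> \<phi> ` ?S" "a \<noteq> x" for a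
  proof -
    have "a \<in> ?Q" "a \<noteq> w" using low \<phi>(1) that(1) unfolding lowering_injection_def by blast+
    then show ?thesis using gap[of a] that(2) by linarith
  qed
  have "inj_on \<phi> ?S" using low by (simp add: lowering_injection_def)
  from twisted_key_interpolation[where lam = lam and p = p and q = q, OF inj _ this gap_S wx(2,3)] heights
  obtain \<alpha> \<beta> :: real where "0 \<le> \<alpha>" "0 \<le> \<beta>" "\<alpha> + \<beta> = 1"
    "\<And>P. real_of_int (T z P) = \<alpha> * real_of_int (T w P) + \<beta> * real_of_int (T x P)"
    unfolding T_def \<psi>_def by blast
  then have "T z \<in> Dset n lam \<pi>"
    by (intro convex_polytope_Z_convex_combination[OF convex T_w T_x])
  moreover have "T z \<notin> Dset n lam \<pi>"
    unfolding T_def by (rule twisted_key_not_in_Dset) (fact inj heights img pq l low_z z wx(1,2))+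
  ultimately show False by contradiction
qed

theorem theorem7p1:
  fixes n :: nat and lam \<pi> :: "nat \<Rightarrow> nat"
  assumes "n \<ge> 1"
    and "is_partition n lam"
    and "R_permutation n lam \<pi>"
    and "convex_polytope_Z (boxes n lam) (Dset n lam \<pi>)"
  shows "R_312_avoiding n lam \<pi>"
  unfolding R_312_avoiding_def
proof
  have inj: "inj_on \<pi> {1..n}" and img: "\<pi> ` {1..n} \<subseteq> {1..n}"
    using assms(3) by (auto simp: R_permutation_def bij_betw_def)
  assume "R_312_containing n lam \<pi>"
  then obtain p q a b c l where pq: "p < q" and abc: "1 \<le> a" "a \<le> p" "p < b" "b \<le> q" "q < c" "c \<le> n"
    and pattern: "\<pi> b < \<pi> c" "\<pi> c < \<pi> a"
    and l: "1 \<le> l" "l + 1 \<le> lam 1" "zeta n lam l = q" "zeta n lam (l + 1) = p"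
    and heights: "\<And>j. 1 \<le> j \<Longrightarrow> j \<le> lam 1 \<Longrightarrow> zeta n lam j \<le> p \<or> q \<le> zeta n lam j"
    by (rule R_312_containing_witness) blast
  let ?Q = "\<pi> ` {1..q}" and ?S = "\<pi> ` {1..p}"
  have S_Q: "?S \<subseteq> ?Q" and b: "\<pi> b \<in> ?Q" "\<pi> b \<notin> ?S" and a: "\<pi> a \<in> ?S"
    and c: "\<pi> c \<notin> ?Q" "\<pi> c \<le> n"
    using abc pq img inj_on_image_mem_iff[OF inj] by (auto simp: image_subset_iff)
  obtain w x \<phi> where wx: "w \<in> ?Q" "x \<in> ?Q" "w < \<pi> c" "\<pi> c < x"
    and gap: "\<And>u. u \<in> ?Q \<Longrightarrow> u \<le> w \<or> x \<le> u"
    and low: "lowering_injection ?S ?Q \<phi>" and \<phi>: "w \<notin> \<phi> ` ?S" "x \<in> \<phi> ` ?S"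
    by (rule exists_shift_map[OF _ S_Q b pattern(1) c(1) a pattern(2)]) blast+
  have "\<not> convex_polytope_Z (boxes n lam) (Dset n lam \<pi>)"
    by (rule Dset_not_convex_polytope) (fact inj img heights pq l low \<phi> wx gap c)+
  with assms(4) show False by contradiction
qed

end
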